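(* Let $\Gamma=(G,\sigma)$ be a signed graph with vertex set $V_G$, and let $\pi=\{C_1,\ldots,C_t,D\}$ be a partition of $V_G$ with $|C_i|=n_i$ ($i=1,\ldots,t$) and $|D|=d$. Assume: (1) for each $1\le i,j\le t$, any two vertices in $C_i$ have the same $j$-th net-degree, i.e. $d^{\pm}_j(u)=d^{\pm}_j(w)$ for all $u,w\in C_i$; (2) for each $i=1,\ldots,t$ and each $v\in D$, exactly one of the following holds: (a) $d^{\pm}_i(v)=0$; (b) $d^+_i(v)=n_i/2$ and $d^-_i(v)=0$; (c) $d^-_i(v)=n_i/2$ and $d^+_i(v)=0$; (d) $d^+_i(v)=n_i$; (e) $d^-_i(v)=n_i$. Define the signed graph $\Gamma^\pi$ on the same vertex set as follows: all edges not joining a vertex of $D$ to a vertex of $\bigcup_i C_i$ are kept with their signs; for every $v\in D$ and every $1\le i\le t$: in case (a), every edge between $v$ and $C_i$ is kept but its sign is reversed; in case (b), the $n_i/2$ (positive) edges from $v$ to $C_i$ are deleted and $v$ is joined by positive edges to the other $n_i/2$ vertices of $C_i$; in case (c), the $n_i/2$ (negative) edges from $v$ to $C_i$ are deleted and $v$ is joined by negative edges to the other $n_i/2$ vertices of $C_i$; in cases (d) and (e), the edges from $v$ to $C_i$ are left unchanged. Then $\Gamma$ and $\Gamma^\pi$ are cospectral, i.e. their adjacency matrices have the same characteristic polynomial.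
   Context: A signed graph $\Gamma=(G,\sigma)$ is a simple finite graph $G=(V_G,E_G)$ with a map $\sigma:E_G\to\{+1,-1\}$. Its adjacency matrix $A_\Gamma=(a_{uv})$ is the symmetric matrix with $a_{uv}=\sigma(uv)$ if $u,v$ are adjacent and $a_{uv}=0$ otherwise; two signed graphs are cospectral if $\det(xI-A)$ coincide. For a vertex $v$ and a vertex subset $C_i$, $d^+_i(v)$ (resp. $d^-_i(v)$) is the number of positive (resp. negative) edges joining $v$ to vertices of $C_i$, and the $i$-th net-degree is $d^{\pm}_i(v)=d^+_i(v)-d^-_i(v)$. *)

theory Defs
  imports "Jordan_Normal_Form.Char_Poly"
begin

text \<open>A signed graph on the vertex set {0..<n} is represented by its adjacency
matrix: a symmetric n x n integer matrix with zero diagonal and entries in {-1,0,1}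
(entry sigma(uv) if u,v adjacent, 0 otherwise).\<close>
definition signed_adj :: "nat \<Rightarrow> int mat \<Rightarrow> bool" where
  "signed_adj n A \<longleftrightarrow> A \<in> carrier_mat n n \<and>
     (\<forall>u<n. \<forall>v<n. A $$ (u,v) = A $$ (v,u)) \<and>
     (\<forall>u<n. A $$ (u,u) = 0) \<and>
     (\<forall>u<n. \<forall>v<n. A $$ (u,v) \<in> {-1,0,1})"

definition dplus :: "int mat \<Rightarrow> nat set \<Rightarrow> nat \<Rightarrow> nat" where
  "dplus A S v = card {u\<in>S. A $$ (v,u) = 1}"

definition dminus :: "int mat \<Rightarrow> nat set \<Rightarrow> nat \<Rightarrow> nat" where
  "dminus A S v = card {u\<in>S. A $$ (v,u) = -1}"

definition dnet :: "int mat \<Rightarrow> nat set \<Rightarrow> nat \<Rightarrow> int" where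
  "dnet A S v = int (dplus A S v) - int (dminus A S v)"

text \<open>The five cases (a)-(e) of condition (2), for a vertex v and a cell S.
Halves are written multiplicatively: d = |S|/2 iff 2*d = |S|.\<close>
definition caseA :: "int mat \<Rightarrow> nat set \<Rightarrow> nat \<Rightarrow> bool" where
  "caseA A S v \<longleftrightarrow> dnet A S v = 0"
definition caseB :: "int mat \<Rightarrow> nat set \<Rightarrow> nat \<Rightarrow> bool" where
  "caseB A S v \<longleftrightarrow> 2 * dplus A S v = card S \<and> dminus A S v = 0"
definition caseC :: "int mat \<Rightarrow> nat set \<Rightarrow> nat \<Rightarrow> bool" where
  "caseC A S v \<longleftrightarrow> 2 * dminus A S v = card S \<and> dplus A S v = 0"
definition caseD :: "int mat \<Rightarrow> nat set \<Rightarrow> nat \<Rightarrow> bool" where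
  "caseD A S v \<longleftrightarrow> dplus A S v = card S"
definition caseE :: "int mat \<Rightarrow> nat set \<Rightarrow> nat \<Rightarrow> bool" where
  "caseE A S v \<longleftrightarrow> dminus A S v = card S"

text \<open>New value of the entry between v in D and u in the cell S in Gamma^pi.\<close>
definition new_entry :: "int mat \<Rightarrow> nat set \<Rightarrow> nat \<Rightarrow> nat \<Rightarrow> int" where
  "new_entry A S v u =
     (if caseA A S v then - A $$ (v,u)
      else if caseB A S v then (if A $$ (v,u) = 1 then 0 else 1)
      else if caseC A S v then (if A $$ (v,u) = -1 then 0 else -1)
      else A $$ (v,u))"

text \<open>Adjacency matrix of Gamma^pi for the partition {C 0, ..., C (t-1), D}.\<close>
definition gpi :: "nat \<Rightarrow> int mat \<Rightarrow> nat \<Rightarrow> (nat \<Rightarrow> nat set) \<Rightarrow> nat set \<Rightarrow> int mat" where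
  "gpi n A t C D = mat n n (\<lambda>(x,y).
     if x \<in> D \<and> (\<exists>i<t. y \<in> C i) then new_entry A (C (THE i. i < t \<and> y \<in> C i)) x y
     else if y \<in> D \<and> (\<exists>i<t. x \<in> C i) then new_entry A (C (THE i. i < t \<and> x \<in> C i)) y x
     else A $$ (x,y))"

end

theory Submission imports Defs begin

text \<open>Let \<open>Q\<close> be the block diagonal matrix which is the identity on \<open>D\<close> and
  \<open>(2/n\<^sub>i) J - I\<close> on each cell \<open>C\<^sub>i\<close> (a Godsil-McKay type switching matrix). It is
  symmetric and \<open>Q\<^sup>2 = I\<close>, so it suffices to show \<open>Q A Q = A\<^sup>\<pi>\<close>. Conjugating by \<open>Q\<close> replaces
  the part of a row of \<open>v \<in> D\<close> lying over \<open>C\<^sub>i\<close> by \<open>(2/n\<^sub>i) d\<^sup>\<plusminus>\<^sub>i(v) \<one> - a\<close>, and in each of the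
  cases (a)-(e) this is exactly the modification defining \<open>\<Gamma>\<^sup>\<pi>\<close>. On a block \<open>C\<^sub>i \<times> C\<^sub>j\<close> all row
  sums equal some \<open>r\<close> and all column sums some \<open>c\<close>, and double counting gives
  \<open>n\<^sub>i r = n\<^sub>j c\<close>, which makes the correction terms of the conjugation cancel.\<close>

lemma sum_row_eq_dnet:
  assumes "finite S" and "\<forall>u\<in>S. A $$ (v,u) \<in> {-1,0,1}"
  shows "(\<Sum>u\<in>S. A $$ (v,u)) = dnet A S v"
proof -
  have "(\<Sum>u\<in>S. A $$ (v,u)) = (\<Sum>u\<in>S. of_bool (A $$ (v,u) = 1) - of_bool (A $$ (v,u) = -1))"
    using assms(2) by (intro sum.cong) auto
  also have "\<dots> = int (dplus A S v) - int (dminus A S v)"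
    using assms(1) by (simp add: sum_subtractf dplus_def dminus_def Int_def flip: sum.inter_filter)
  finally show ?thesis unfolding dnet_def .
qed

lemma of_int_new_entry_eq:
  assumes S: "finite S" "u \<in> S" and vals: "\<forall>w\<in>S. A $$ (v,w) \<in> {-1,0,1}"
    and one_case: "caseA A S v \<or> caseB A S v \<or> caseC A S v \<or> caseD A S v \<or> caseE A S v"
  shows "rat_of_int (new_entry A S v u) = 2 / of_nat (card S) * of_int (dnet A S v) - of_int (A $$ (v,u))"
proof -
  define p m where "p = dplus A S v" and "m = dminus A S v"
  have card_pos: "card S > 0" using S card_gt_0_iff by blast
  have u_vals: "A $$ (v,u) \<in> {-1,0,1}" using vals S by blast
  have p0: "A $$ (v,u) \<noteq> 1" if "p = 0"
    using that S unfolding p_def dplus_def by auto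
  have m0: "A $$ (v,u) \<noteq> -1" if "m = 0"
    using that S unfolding m_def dminus_def by auto
  have pS: "A $$ (v,u) = 1" if "p = card S"
  proof -
    have "{w\<in>S. A $$ (v,w) = 1} = S"
      using that S(1) unfolding p_def dplus_def by (intro card_subset_eq) auto
    then show ?thesis using S(2) by blast
  qed
  have mS: "A $$ (v,u) = -1" if "m = card S"
  proof -
    have "{w\<in>S. A $$ (v,w) = -1} = S"
      using that S(1) unfolding m_def dminus_def by (intro card_subset_eq) auto
    then show ?thesis using S(2) by blast
  qed
  have net: "dnet A S v = int p - int m" unfolding dnet_def p_def m_def ..
  consider "caseA A S v"
    | "\<not> caseA A S v" "caseB A S v"
    | "\<not> caseA A S v" "\<not> caseB A S v" "caseC A S v"
    | "\<not> caseA A S v" "\<not> caseB A S v" "\<not> caseC A S v" "caseD A S v \<or> caseE A S v"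
    using one_case by blast
  then show ?thesis
  proof cases
    case 1
    then show ?thesis by (simp add: new_entry_def caseA_def)
  next
    case 2
    then have "2 * p = card S" "m = 0" unfolding caseB_def p_def m_def by auto
    then show ?thesis using 2 m0 u_vals card_pos
      by (auto simp: new_entry_def net field_simps)
  next
    case 3
    then have "2 * m = card S" "p = 0" unfolding caseC_def p_def m_def by auto
    then show ?thesis using 3 p0 u_vals card_pos
      by (auto simp: new_entry_def net field_simps)
  next
    case 4
    moreover have "p + m \<le> card S"
      using S(1) card_Un_disjoint[of "{w\<in>S. A $$ (v,w) = 1}" "{w\<in>S. A $$ (v,w) = -1}"]
        card_mono[of S "{w\<in>S. A $$ (v,w) = 1} \<union> {w\<in>S. A $$ (v,w) = -1}"]
      unfolding p_def m_def dplus_def dminus_def by fastforce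
    ultimately consider "p = card S" "m = 0" | "m = card S" "p = 0"
      unfolding caseD_def caseE_def p_def m_def by fastforce
    then show ?thesis using 4 pS mS card_pos
      by cases (auto simp: new_entry_def net)
  qed
qed

locale vertex_partition =
  fixes n t :: nat and C :: "nat \<Rightarrow> nat set" and D :: "nat set"
  assumes cells_nonempty: "\<forall>i<t. C i \<noteq> {}"
    and partition_cover: "(\<Union>i<t. C i) \<union> D = {0..<n}"
    and cells_disjoint: "\<forall>i<t. \<forall>j<t. i \<noteq> j \<longrightarrow> C i \<inter> C j = {}"
    and cells_disjoint_D: "\<forall>i<t. C i \<inter> D = {}"
begin

definition cell :: "nat \<Rightarrow> nat" where
  "cell x = (THE i. i < t \<and> x \<in> C i)"

lemma cell_eqI: "i < t \<Longrightarrow> x \<in> C i \<Longrightarrow> cell x = i"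
  unfolding cell_def by (rule the_equality) (use cells_disjoint in auto)

lemma cell_subset: "i < t \<Longrightarrow> C i \<subseteq> {0..<n}"
  using partition_cover by auto

lemma finite_cell: "i < t \<Longrightarrow> finite (C i)"
  using cell_subset finite_subset by blast

lemma card_cell_pos: "i < t \<Longrightarrow> card (C i) > 0"
  using cells_nonempty finite_cell by (simp add: card_gt_0_iff)

lemma D_subset: "D \<subseteq> {0..<n}"
  using partition_cover by auto

lemma notin_D_iff: "x < n \<Longrightarrow> x \<notin> D \<longleftrightarrow> (\<exists>i<t. x \<in> C i)"
  using partition_cover cells_disjoint_D by auto

lemma cell_of_vertex: "x < n \<Longrightarrow> x \<notin> D \<Longrightarrow> cell x < t \<and> x \<in> C (cell x)"
  using notin_D_iff cell_eqI by blast

lemma in_cell_iff: "x < n \<Longrightarrow> x \<notin> D \<Longrightarrow> y \<in> C (cell x) \<longleftrightarrow> y \<notin> D \<and> y < n \<and> cell y = cell x"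
  using cell_of_vertex[of x] cell_of_vertex[of y] cell_eqI[of "cell x" y] cell_subset[of "cell x"] cells_disjoint_D by auto

definition switching_mat :: "rat mat" where
  "switching_mat = mat n n (\<lambda>(x,y).
     if x \<in> D then of_bool (x = y)
     else if y \<in> C (cell x) then 2 / of_nat (card (C (cell x))) - of_bool (x = y) else 0)"

lemma switching_mat_carrier: "switching_mat \<in> carrier_mat n n"
  by (simp add: switching_mat_def)

lemma switching_mat_index: "x < n \<Longrightarrow> y < n \<Longrightarrow> switching_mat $$ (x,y) =
    (if x \<in> D then of_bool (x = y)
     else if y \<in> C (cell x) then 2 / of_nat (card (C (cell x))) - of_bool (x = y) else 0)"
  by (simp add: switching_mat_def)

lemma switching_mat_symmetric: "x < n \<Longrightarrow> y < n \<Longrightarrow> switching_mat $$ (x,y) = switching_mat $$ (y,x)"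
  using in_cell_iff[of x y] in_cell_iff[of y x] by (auto simp: switching_mat_index)

lemma transpose_switching_mat: "transpose_mat switching_mat = switching_mat"
  using switching_mat_symmetric by (auto simp: switching_mat_def)

lemma switching_mat_mult_index:
  assumes "M \<in> carrier_mat n k" "x < n" "y < k"
  shows "(switching_mat * M) $$ (x,y) = (if x \<in> D then M $$ (x,y)
     else 2 / of_nat (card (C (cell x))) * (\<Sum>a\<in>C (cell x). M $$ (a,y)) - M $$ (x,y))"
proof -
  have "(switching_mat * M) $$ (x,y) = (\<Sum>a<n. switching_mat $$ (x,a) * M $$ (a,y))"
    using assms by (simp add: switching_mat_def scalar_prod_def atLeast0LessThan)
  also have "\<dots> = (if x \<in> D then M $$ (x,y)
     else 2 / of_nat (card (C (cell x))) * (\<Sum>a\<in>C (cell x). M $$ (a,y)) - M $$ (x,y))"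
  proof (cases "x \<in> D")
    case False
    then have "cell x < t" "x \<in> C (cell x)" using cell_of_vertex assms(2) by auto
    moreover have "C (cell x) = {..<n} \<inter> C (cell x)" using cell_subset[of "cell x"] calculation by auto
    ultimately show ?thesis using False assms(2)
      by (simp add: switching_mat_index if_distrib[of "\<lambda>z. z * _"] left_diff_distrib sum_subtractf
          sum_distrib_left sum.If_cases finite_cell cong: if_cong)
  qed (use assms(2) in \<open>simp add: switching_mat_index if_distrib[of "\<lambda>z. z * _"] cong: if_cong\<close>)
  finally show ?thesis .
qed

lemma mult_switching_mat_index:
  assumes M: "M \<in> carrier_mat k n" and xy: "x < k" "y < n"
  shows "(M * switching_mat) $$ (x,y) = (if y \<in> D then M $$ (x,y)
     else 2 / of_nat (card (C (cell y))) * (\<Sum>b\<in>C (cell y). M $$ (x,b)) - M $$ (x,y))"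
proof -
  have "M * switching_mat = transpose_mat (switching_mat * transpose_mat M)"
    using M switching_mat_carrier
    by (simp add: transpose_mult[of switching_mat n n "transpose_mat M" k] transpose_switching_mat)
  then show ?thesis
    using M xy switching_mat_mult_index[of "transpose_mat M" k y x] switching_mat_carrier
    by (auto intro!: sum.cong dest!: subsetD[OF cell_subset[OF conjunct1[OF cell_of_vertex]]])
qed

lemma switching_mat_cell_sum:
  assumes "i < t" "y < n"
  shows "(\<Sum>a\<in>C i. switching_mat $$ (a,y)) = of_bool (y \<in> C i)"
proof -
  have "(\<Sum>a\<in>C i. switching_mat $$ (a,y)) = (\<Sum>a\<in>C i. switching_mat $$ (y,a))"
    using assms cell_subset[OF assms(1)]
    by (intro sum.cong refl) (metis atLeastLessThan_iff subsetD switching_mat_symmetric)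
  also have "\<dots> = of_bool (y \<in> C i)"
  proof (cases "y \<in> D")
    case True
    then show ?thesis using assms cell_subset[OF assms(1)] cells_disjoint_D
      by (auto simp: switching_mat_index subset_eq intro!: sum.neutral)
  next
    case False
    note y = cell_of_vertex[OF assms(2) False]
    show ?thesis
    proof (cases "cell y = i")
      case True
      then show ?thesis using assms y cell_subset[of i] card_cell_pos[of i] finite_cell[of i] False
        by (auto simp: switching_mat_index sum_subtractf subset_eq)
    next
      case other: False
      then have "C (cell y) \<inter> C i = {}" using cells_disjoint assms y by blast
      then show ?thesis using assms y cell_subset[of i] other cell_eqI[of i y] False
        by (auto simp: switching_mat_index subset_eq intro!: sum.neutral)
    qed
  qed
  finally show ?thesis .
qed

lemma switching_mat_involution: "switching_mat * switching_mat = 1\<^sub>m n"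
proof (rule eq_matI)
  fix x y assume "x < dim_row (1\<^sub>m n :: rat mat)" "y < dim_col (1\<^sub>m n :: rat mat)"
  then have xy: "x < n" "y < n" by auto
  show "(switching_mat * switching_mat) $$ (x,y) = 1\<^sub>m n $$ (x,y)"
  proof (cases "x \<in> D")
    case False
    note x = cell_of_vertex[OF xy(1) False]
    have "card (C (cell x)) > 0" using card_cell_pos x by blast
    then show ?thesis
      using xy x False switching_mat_cell_sum[of "cell x" y]
      by (auto simp: switching_mat_mult_index[OF switching_mat_carrier xy] switching_mat_index)
  qed (use xy in \<open>simp add: switching_mat_mult_index[OF switching_mat_carrier xy] switching_mat_index\<close>)
qed (auto simp: switching_mat_def)

end

lemma char_poly_eq_if_similar_over_rat:
  assumes "A \<in> carrier_mat n n" "B \<in> carrier_mat n n"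
    and "similar_mat (map_mat rat_of_int A) (map_mat rat_of_int B)"
  shows "char_poly A = char_poly B"
proof -
  have "char_poly (map_mat rat_of_int A) = char_poly (map_mat rat_of_int B)"
    using assms(3) by (rule char_poly_similar)
  then show ?thesis
    by (simp add: of_int_hom.char_poly_hom[OF assms(1)] of_int_hom.char_poly_hom[OF assms(2)])
qed

locale switching_data = vertex_partition +
  fixes A :: "int mat"
  assumes signed: "signed_adj n A"
    and equal_net_degrees: "\<forall>i<t. \<forall>j<t. \<forall>u\<in>C i. \<forall>w\<in>C i. dnet A (C j) u = dnet A (C j) w"
    and unique_case: "\<forall>i<t. \<forall>v\<in>D. length (filter id [caseA A (C i) v, caseB A (C i) v,
            caseC A (C i) v, caseD A (C i) v, caseE A (C i) v]) = 1"
begin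

lemma A_carrier: "A \<in> carrier_mat n n"
  using signed unfolding signed_adj_def by blast

lemma A_symmetric: "u < n \<Longrightarrow> v < n \<Longrightarrow> A $$ (u,v) = A $$ (v,u)"
  using signed unfolding signed_adj_def by blast

lemma A_entries: "u < n \<Longrightarrow> v < n \<Longrightarrow> A $$ (u,v) \<in> {-1,0,1}"
  using signed unfolding signed_adj_def by blast

lemma row_sum_cell: "i < t \<Longrightarrow> v < n \<Longrightarrow> (\<Sum>u\<in>C i. A $$ (v,u)) = dnet A (C i) v"
  using A_entries cell_subset finite_cell by (intro sum_row_eq_dnet) (auto simp: subset_eq)

lemma column_sum_cell:
  assumes "i < t" "v < n" shows "(\<Sum>u\<in>C i. A $$ (u,v)) = dnet A (C i) v"
proof -
  have "(\<Sum>u\<in>C i. A $$ (u,v)) = (\<Sum>u\<in>C i. A $$ (v,u))"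
    using assms cell_subset by (intro sum.cong refl) (metis A_symmetric atLeastLessThan_iff subsetD)
  then show ?thesis using assms row_sum_cell by simp
qed

lemma card_mult_dnet_eq:
  assumes ij: "i < t" "j < t" and "x \<in> C i" "y \<in> C j"
  shows "int (card (C i)) * dnet A (C j) x = int (card (C j)) * dnet A (C i) y"
proof -
  have const_i: "dnet A (C j) a = dnet A (C j) x" if "a \<in> C i" for a
    using assms that equal_net_degrees by blast
  have const_j: "dnet A (C i) b = dnet A (C i) y" if "b \<in> C j" for b
    using assms that equal_net_degrees by blast
  have "int (card (C i)) * dnet A (C j) x = (\<Sum>a\<in>C i. dnet A (C j) a)"
    using const_i by simp
  also have "\<dots> = (\<Sum>a\<in>C i. \<Sum>b\<in>C j. A $$ (a,b))"
    using ij cell_subset by (auto simp: subset_eq row_sum_cell)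
  also have "\<dots> = (\<Sum>b\<in>C j. \<Sum>a\<in>C i. A $$ (a,b))"
    by (rule sum.swap)
  also have "\<dots> = (\<Sum>b\<in>C j. dnet A (C i) b)"
    using ij cell_subset by (auto simp: subset_eq column_sum_cell)
  also have "\<dots> = int (card (C j)) * dnet A (C i) y"
    using const_j by simp
  finally show ?thesis .
qed

lemma new_entry_switched:
  assumes "i < t" "v \<in> D" "u \<in> C i"
  shows "rat_of_int (new_entry A (C i) v u)
    = 2 / of_nat (card (C i)) * of_int (dnet A (C i) v) - of_int (A $$ (v,u))"
proof (rule of_int_new_entry_eq)
  show "\<forall>w\<in>C i. A $$ (v,w) \<in> {-1,0,1}"
    using assms A_entries cell_subset[of i] D_subset by (auto simp: subset_eq)
  show "caseA A (C i) v \<or> caseB A (C i) v \<or> caseC A (C i) v \<or> caseD A (C i) v \<or> caseE A (C i) v"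
  proof -
    \<comment> \<open>only the existence part of ``exactly one'' is needed\<close>
    have some_true: "\<exists>b\<in>set bs. b" if "length (filter id bs) = 1" for bs
      using that filter_empty_conv[of id bs] by fastforce
    have "length (filter id [caseA A (C i) v, caseB A (C i) v, caseC A (C i) v, caseD A (C i) v,
        caseE A (C i) v]) = 1"
      using unique_case assms by blast
    from some_true[OF this] show ?thesis by simp
  qed
qed (use assms finite_cell in auto)

lemma gpi_index: "x < n \<Longrightarrow> y < n \<Longrightarrow> gpi n A t C D $$ (x,y) =
    (if x \<in> D \<and> y \<notin> D then new_entry A (C (cell y)) x y
     else if y \<in> D \<and> x \<notin> D then new_entry A (C (cell x)) y x
     else A $$ (x,y))"
  using notin_D_iff[of x] notin_D_iff[of y] by (auto simp: gpi_def cell_def)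

abbreviation A_rat :: "rat mat" where
  "A_rat \<equiv> map_mat rat_of_int A"

lemma A_mult_switching_mat_index:
  assumes "a < n" "y < n"
  shows "(A_rat * switching_mat) $$ (a,y) = (if y \<in> D then of_int (A $$ (a,y))
    else 2 / of_nat (card (C (cell y))) * of_int (dnet A (C (cell y)) a) - of_int (A $$ (a,y)))"
proof (cases "y \<in> D")
  case False
  note y = cell_of_vertex[OF assms(2) False]
  have "(\<Sum>b\<in>C (cell y). A_rat $$ (a,b)) = of_int (\<Sum>b\<in>C (cell y). A $$ (a,b))"
    using assms y cell_subset[of "cell y"] A_carrier by (auto simp: subset_eq intro!: sum.cong)
  then show ?thesis
    using assms y False A_carrier row_sum_cell[of "cell y" a]
    by (simp add: mult_switching_mat_index[of A_rat n])
qed (use assms A_carrier in \<open>simp add: mult_switching_mat_index[of A_rat n]\<close>)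

lemma switching_conj_index_cells:
  assumes xy: "x < n" "y < n" "x \<notin> D" "y \<notin> D"
  shows "(switching_mat * (A_rat * switching_mat)) $$ (x,y) = of_int (A $$ (x,y))"
proof -
  define i j where "i = cell x" and "j = cell y"
  define r c :: rat where "r = of_int (dnet A (C j) x)" and "c = of_int (dnet A (C i) y)"
  define ni nj :: rat where "ni = of_nat (card (C i))" and "nj = of_nat (card (C j))"
  have i: "i < t" "x \<in> C i" and j: "j < t" "y \<in> C j"
    using cell_of_vertex xy unfolding i_def j_def by auto
  have pos: "ni > 0" "nj > 0" using card_cell_pos i j unfolding ni_def nj_def by auto
  have "rat_of_int (int (card (C i)) * dnet A (C j) x) = of_int (int (card (C j)) * dnet A (C i) y)"
    using card_mult_dnet_eq[OF i(1) j(1) i(2) j(2)] by (rule arg_cong)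
  then have double_count: "ni * r = nj * c"
    unfolding ni_def nj_def r_def c_def by simp
  have P_col: "(A_rat * switching_mat) $$ (a,y) = 2 / nj * r - of_int (A $$ (a,y))" if "a \<in> C i" for a
  proof -
    have "a < n" using that cell_subset[OF i(1)] by auto
    moreover have "dnet A (C j) a = dnet A (C j) x"
      using i j that equal_net_degrees by blast
    ultimately show ?thesis
      using A_mult_switching_mat_index[of a y] xy unfolding r_def nj_def j_def by simp
  qed
  have "(switching_mat * (A_rat * switching_mat)) $$ (x,y)
      = 2 / ni * (\<Sum>a\<in>C i. (A_rat * switching_mat) $$ (a,y)) - (A_rat * switching_mat) $$ (x,y)"
    using switching_mat_mult_index[of "A_rat * switching_mat" n x y] xy A_carrier switching_mat_carrier
    unfolding ni_def i_def by simp
  also have "(\<Sum>a\<in>C i. (A_rat * switching_mat) $$ (a,y)) = ni * (2 / nj * r) - c"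
    using P_col column_sum_cell[OF i(1) xy(2)] unfolding ni_def c_def
    by (simp add: sum_subtractf flip: of_int_sum)
  also have "(A_rat * switching_mat) $$ (x,y) = 2 / nj * r - of_int (A $$ (x,y))"
    using P_col i(2) .
  also have "2 / ni * (ni * (2 / nj * r) - c) - (2 / nj * r - of_int (A $$ (x,y)))
      = 2 * (ni * r - nj * c) / (ni * nj) + of_int (A $$ (x,y))"
    using pos by (simp add: field_simps)
  finally show ?thesis using double_count by simp
qed

lemma switching_conj_eq_gpi:
  "map_mat rat_of_int (gpi n A t C D) = switching_mat * (A_rat * switching_mat)"
proof (rule eq_matI)
  fix x y assume "x < dim_row (switching_mat * (A_rat * switching_mat))"
    "y < dim_col (switching_mat * (A_rat * switching_mat))"
  then have xy: "x < n" "y < n" by (auto simp: switching_mat_def)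
  have P: "A_rat * switching_mat \<in> carrier_mat n n"
    using A_carrier switching_mat_carrier by simp
  have lhs: "map_mat rat_of_int (gpi n A t C D) $$ (x,y) = of_int (gpi n A t C D $$ (x,y))"
    using xy by (simp add: gpi_def)
  consider "x \<in> D" "y \<in> D" | "x \<in> D" "y \<notin> D" | "x \<notin> D" "y \<in> D" | "x \<notin> D" "y \<notin> D"
    by blast
  then show "map_mat rat_of_int (gpi n A t C D) $$ (x,y)
      = (switching_mat * (A_rat * switching_mat)) $$ (x,y)"
  proof cases
    case 1
    then show ?thesis
      using xy lhs by (simp add: gpi_index switching_mat_mult_index[OF P] A_mult_switching_mat_index)
  next
    case 2
    then show ?thesis
      using xy lhs cell_of_vertex[of y] new_entry_switched[of "cell y" x y]
      by (simp add: gpi_index switching_mat_mult_index[OF P] A_mult_switching_mat_index)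
  next
    case 3
    note x = cell_of_vertex[OF xy(1) 3(1)]
    have "(\<Sum>a\<in>C (cell x). (A_rat * switching_mat) $$ (a,y)) = of_int (dnet A (C (cell x)) y)"
      using 3 xy x cell_subset[of "cell x"] column_sum_cell[of "cell x" y]
      by (auto simp: A_mult_switching_mat_index subset_eq simp flip: of_int_sum intro!: sum.cong)
    then show ?thesis
      using 3 xy x lhs new_entry_switched[of "cell x" y x] A_symmetric[OF xy]
      by (simp add: gpi_index switching_mat_mult_index[OF P] A_mult_switching_mat_index)
  next
    case 4
    then show ?thesis
      using xy lhs switching_conj_index_cells by (simp add: gpi_index)
  qed
qed (auto simp: gpi_def switching_mat_def)

lemma char_poly_gpi: "char_poly (gpi n A t C D) = char_poly A"
proof (rule char_poly_eq_if_similar_over_rat)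
  show G: "gpi n A t C D \<in> carrier_mat n n" by (simp add: gpi_def)
  show "A \<in> carrier_mat n n" by (rule A_carrier)
  have "switching_mat * A_rat * switching_mat = map_mat rat_of_int (gpi n A t C D)"
    using A_carrier switching_mat_carrier
    by (simp add: switching_conj_eq_gpi assoc_mult_mat[of _ n n _ n _ n])
  then have "similar_mat_wit (map_mat rat_of_int (gpi n A t C D)) A_rat switching_mat switching_mat"
    using G A_carrier switching_mat_carrier switching_mat_involution
    by (auto simp: similar_mat_wit_def)
  then show "similar_mat (map_mat rat_of_int (gpi n A t C D)) A_rat"
    unfolding similar_mat_def by blast
qed

end

theorem theorem3p2:
  fixes n t :: nat and A :: "int mat" and C :: "nat \<Rightarrow> nat set" and D :: "nat set"
  assumes "signed_adj n A"
    and "\<forall>i<t. C i \<noteq> {}"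
    and "(\<Union>i<t. C i) \<union> D = {0..<n}"
    and "\<forall>i<t. \<forall>j<t. i \<noteq> j \<longrightarrow> C i \<inter> C j = {}"
    and "\<forall>i<t. C i \<inter> D = {}"
    and "\<forall>i<t. \<forall>j<t. \<forall>u\<in>C i. \<forall>w\<in>C i. dnet A (C j) u = dnet A (C j) w"
    and "\<forall>i<t. \<forall>v\<in>D. length (filter id [caseA A (C i) v, caseB A (C i) v,
            caseC A (C i) v, caseD A (C i) v, caseE A (C i) v]) = 1"
  shows "char_poly (gpi n A t C D) = char_poly A"
proof -
  interpret switching_data n t C D A
    using assms by unfold_locales
  show ?thesis by (rule char_poly_gpi)
qed

end
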